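(* Let $r:\mathcal V\to\mathbb P(\mathcal L)$ be a discrete Ribaucour sphere congruence and $u$ a totally umbilic envelope of $r$ with point sphere map $u^p$. Then for every face $(ijkl)$ the face cross-ratios coincide: $\mathrm{cr}(r_i,r_j,r_k,r_l)=\mathrm{cr}(u^p_i,u^p_j,u^p_k,u^p_l)$. In particular, $u^p$ is isothermic if and only if $r$ is isothermic.
   Context: $\mathbb{R}^{4,2}$ is $\mathbb R^6$ with a symmetric bilinear form $\langle\cdot,\cdot\rangle$ of signature $(4,2)$, $\mathcal L$ its light cone, $\mathbb P(\mathcal L)$ the set of oriented spheres; black letters denote homogeneous coordinates. A point sphere complex $\mathfrak p$, $\langle\mathfrak p,\mathfrak p\rangle=-1$, is fixed; point spheres are spheres orthogonal to $\mathfrak p$; each contact element (2-dim totally null subspace) contains exactly one point sphere. $\mathcal V$ is the vertex set of a simply connected subset of $\mathbb Z^2$; faces $(ijkl)$ are listed in cyclic order. A discrete Legendre map is a map $f$ from $\mathcal V$ to contact elements with adjacent contact elements sharing a sphere (its curvature sphere on that edge); it envelops a sphere congruence $r$ if $r_i\in f_i$. A discrete Legendre map is totally umbilic if all its curvature spheres coincide (a constant sphere $n$) and its point sphere map is a circular net for any choice of point sphere complex; a totally umbilic envelope of $r$ then has the form $u_i=\langle\!\langle\mathfrak n,\mathfrak r_i\rangle\!\rangle$. A discrete Ribaucour sphere congruence is a non-degenerate discrete conjugate net $r:\mathcal V\to\mathbb P(\mathcal L)$ (the coordinates of the four spheres of each face span a 3-dim subspace of signature $(2,1)$ or $(1,2)$).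 The cross-ratio of four spheres or point spheres is $\mathrm{cr}(s_1,s_2,s_3,s_4)=\frac{\langle\mathfrak s_1,\mathfrak s_2\rangle\langle\mathfrak s_3,\mathfrak s_4\rangle}{\langle\mathfrak s_2,\mathfrak s_3\rangle\langle\mathfrak s_4,\mathfrak s_1\rangle}$. A map $x:\mathcal V\to\mathbb P(\mathcal L)$ with planar faces is isothermic if there is a function $a$ on edges, taking equal values on opposite edges of every face, such that $\mathrm{cr}(x_i,x_j,x_k,x_l)=a_{ij}/a_{jk}$ on every face $(ijkl)$. *)

theory Defs
  imports "HOL-Analysis.Analysis"
begin

text \<open>R^{4,2}: real^6 with the standard symmetric bilinear form of signature (4,2).
 Spheres (points of P(L)) are represented by homogeneous coordinates: nonzero null vectors.\<close>

definition lf :: "real^6 \<Rightarrow> real^6 \<Rightarrow> real" where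
  "lf x y = x$1*y$1 + x$2*y$2 + x$3*y$3 + x$4*y$4 - x$5*y$5 - x$6*y$6"

definition lightlike :: "real^6 \<Rightarrow> bool" where
  "lightlike x \<longleftrightarrow> x \<noteq> 0 \<and> lf x x = 0"

definition same_point :: "real^6 \<Rightarrow> real^6 \<Rightarrow> bool" where
  "same_point x y \<longleftrightarrow> (\<exists>c::real. c \<noteq> 0 \<and> y = c *\<^sub>R x)"

definition point_sphere_complex :: "real^6 \<Rightarrow> bool" where
  "point_sphere_complex p \<longleftrightarrow> lf p p = -1"

definition contact_element :: "(real^6) set \<Rightarrow> bool" where
  "contact_element W \<longleftrightarrow> subspace W \<and> dim W = 2 \<and> (\<forall>x\<in>W. \<forall>y\<in>W. lf x y = 0)"

definition point_sphere :: "real^6 \<Rightarrow> (real^6) set \<Rightarrow> real^6" where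
  "point_sphere p W = (SOME x. x \<in> W \<and> x \<noteq> 0 \<and> lf x p = 0)"

definition cr :: "real^6 \<Rightarrow> real^6 \<Rightarrow> real^6 \<Rightarrow> real^6 \<Rightarrow> real" where
  "cr s1 s2 s3 s4 = (lf s1 s2 * lf s3 s4) / (lf s2 s3 * lf s4 s1)"

definition adjacent :: "int \<times> int \<Rightarrow> int \<times> int \<Rightarrow> bool" where
  "adjacent i j \<longleftrightarrow> \<bar>fst i - fst j\<bar> + \<bar>snd i - snd j\<bar> = 1"

definition edge :: "(int \<times> int) set \<Rightarrow> int \<times> int \<Rightarrow> int \<times> int \<Rightarrow> bool" where
  "edge V i j \<longleftrightarrow> i \<in> V \<and> j \<in> V \<and> adjacent i j"

text \<open>(i,j,k,l) is a face listed in cyclic order: the four vertices of a unit square of Z^2,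
  all in V, traversed cyclically (any starting vertex, any orientation).\<close>
definition is_face :: "(int \<times> int) set \<Rightarrow> int \<times> int \<Rightarrow> int \<times> int \<Rightarrow> int \<times> int \<Rightarrow> int \<times> int \<Rightarrow> bool" where
  "is_face V i j k l \<longleftrightarrow> edge V i j \<and> edge V j k \<and> edge V k l \<and> edge V l i \<and> i \<noteq> k \<and> j \<noteq> l"

definition pt :: "int \<times> int \<Rightarrow> real \<times> real" where
  "pt i = (real_of_int (fst i), real_of_int (snd i))"

definition realization :: "(int \<times> int) set \<Rightarrow> (real \<times> real) set" where
  "realization V =
     pt ` V
     \<union> (\<Union>{closed_segment (pt i) (pt j) | i j. edge V i j})
     \<union> (\<Union>{cbox (pt (a,b)) (pt (a+1,b+1)) | a b.
            (a,b) \<in> V \<and> (a+1,b) \<in> V \<and> (a,b+1) \<in> V \<and> (a+1,b+1) \<in> V})"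

definition simply_connected_vertex_set :: "(int \<times> int) set \<Rightarrow> bool" where
  "simply_connected_vertex_set V \<longleftrightarrow>
     path_connected (realization V) \<and> simply_connected (realization V)"

definition legendre_map :: "(int \<times> int) set \<Rightarrow> (int \<times> int \<Rightarrow> (real^6) set) \<Rightarrow> bool" where
  "legendre_map V f \<longleftrightarrow>
     (\<forall>i\<in>V. contact_element (f i)) \<and>
     (\<forall>i j. edge V i j \<longrightarrow> (\<exists>s. s \<noteq> 0 \<and> s \<in> f i \<inter> f j))"

definition envelops :: "(int \<times> int) set \<Rightarrow> (int \<times> int \<Rightarrow> (real^6) set) \<Rightarrow> (int \<times> int \<Rightarrow> real^6) \<Rightarrow> bool" where
  "envelops V f r \<longleftrightarrow> (\<forall>i\<in>V. r i \<in> f i)"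

text \<open>Circular net (points with four concircular points on each face, i.e. the four
  homogeneous coordinate vectors are linearly dependent).\<close>
definition circular_net :: "(int \<times> int) set \<Rightarrow> (int \<times> int \<Rightarrow> real^6) \<Rightarrow> bool" where
  "circular_net V x \<longleftrightarrow>
     (\<forall>i j k l. is_face V i j k l \<longrightarrow> dim (span {x i, x j, x k, x l}) \<le> 3)"

definition totally_umbilic :: "(int \<times> int) set \<Rightarrow> (int \<times> int \<Rightarrow> (real^6) set) \<Rightarrow> bool" where
  "totally_umbilic V f \<longleftrightarrow> legendre_map V f \<and>
     (\<exists>n. n \<noteq> 0 \<and> (\<forall>i j. edge V i j \<longrightarrow> n \<in> f i \<inter> f j)) \<and>
     (\<forall>q. point_sphere_complex q \<longrightarrow> circular_net V (\<lambda>i. point_sphere q (f i)))"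

text \<open>A 3-dim subspace with signature (a,b), a+b=3, given by a basis with diagonal Gram matrix.\<close>
definition sig3 :: "(real^6) set \<Rightarrow> real \<Rightarrow> real \<Rightarrow> real \<Rightarrow> bool" where
  "sig3 W s1 s2 s3 \<longleftrightarrow> (\<exists>e1 e2 e3. W = span {e1, e2, e3} \<and>
      lf e1 e1 = s1 \<and> lf e2 e2 = s2 \<and> lf e3 e3 = s3 \<and>
      lf e1 e2 = 0 \<and> lf e1 e3 = 0 \<and> lf e2 e3 = 0)"

definition ribaucour :: "(int \<times> int) set \<Rightarrow> (int \<times> int \<Rightarrow> real^6) \<Rightarrow> bool" where
  "ribaucour V r \<longleftrightarrow> (\<forall>i\<in>V. lightlike (r i)) \<and>
     (\<forall>i j k l. is_face V i j k l \<longrightarrow>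
        (let W = span {r i, r j, r k, r l} in sig3 W 1 1 (-1) \<or> sig3 W 1 (-1) (-1)))"

definition isothermic :: "(int \<times> int) set \<Rightarrow> (int \<times> int \<Rightarrow> real^6) \<Rightarrow> bool" where
  "isothermic V x \<longleftrightarrow>
     (\<forall>i j k l. is_face V i j k l \<longrightarrow> dim (span {x i, x j, x k, x l}) \<le> 3) \<and>
     (\<exists>a :: int \<times> int \<Rightarrow> int \<times> int \<Rightarrow> real.
        (\<forall>i j. edge V i j \<longrightarrow> a i j = a j i \<and> a i j \<noteq> 0) \<and>
        (\<forall>i j k l. is_face V i j k l \<longrightarrow>
            a i j = a k l \<and> a j k = a l i \<and> cr (x i) (x j) (x k) (x l) = a i j / a j k))"

end

theory Submission
  imports Defs
begin

(* All contact elements of a face contain the constant curvature sphere n, which is null and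
   orthogonal to the four enveloped spheres r_m. Since n is not a point sphere, the point sphere
   of the m-th contact element is a_m n + b_m r_m with b_m nonzero, and in every inner product
   of two such point spheres the n-terms drop out; the factors b_m cancel in the cross-ratio.
   Isothermicity depends only on planarity and the face cross-ratios, which therefore agree. *)

lemma lf_sym: "lf x y = lf y x" by (simp add: lf_def algebra_simps)
lemma lf_add_left: "lf (x + y) z = lf x z + lf y z" by (simp add: lf_def algebra_simps)
lemma lf_add_right: "lf z (x + y) = lf z x + lf z y" by (simp add: lf_def algebra_simps)
lemma lf_diff_left: "lf (x - y) z = lf x z - lf y z" by (simp add: lf_def algebra_simps)
lemma lf_diff_right: "lf z (x - y) = lf z x - lf z y" by (simp add: lf_def algebra_simps)
lemma lf_scaleR_left: "lf (c *\<^sub>R x) z = c * lf x z" by (simp add: lf_def algebra_simps)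
lemma lf_scaleR_right: "lf z (c *\<^sub>R x) = c * lf z x" by (simp add: lf_def algebra_simps)
lemmas lf_simps = lf_add_left lf_add_right lf_diff_left lf_diff_right lf_scaleR_left lf_scaleR_right

lemma linear_lf: "linear (lf z)"
  by (rule linearI) (simp_all add: lf_simps)

lemma lf_eq_0_on_span: "(\<And>w. w \<in> S \<Longrightarrow> lf z w = 0) \<Longrightarrow> x \<in> span S \<Longrightarrow> lf z x = 0"
  using linear_eq_0_on_span[OF linear_lf] by blast

lemma exhaust_6:
  fixes x :: 6
  shows "x = 1 \<or> x = 2 \<or> x = 3 \<or> x = 4 \<or> x = 5 \<or> x = 6"
proof (induct x)
  case (of_int z)
  then have "z = 0 \<or> z = 1 \<or> z = 2 \<or> z = 3 \<or> z = 4 \<or> z = 5" by fastforce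
  then show ?case by auto
qed

lemma dim_le_2_if_lf_nonpos:
  assumes U: "subspace U" and nonpos: "\<And>z. z \<in> U \<Longrightarrow> lf z z \<le> 0"
  shows "dim U \<le> 2"
proof -
  define h where "h = (\<lambda>z::real^6. (z$5, z$6))"
  have lin: "linear h" unfolding h_def by (rule linearI) auto
  have ker: "z = 0" if "z \<in> U" "h z = 0" for z
  proof -
    have "z$5 = 0" "z$6 = 0" using that(2) by (auto simp: h_def zero_prod_def)
    then have "(z$1)^2 + (z$2)^2 + (z$3)^2 + (z$4)^2 \<le> 0"
      using nonpos[OF that(1)] by (simp add: lf_def power2_eq_square)
    then have "z$1 = 0" "z$2 = 0" "z$3 = 0" "z$4 = 0"
      by (smt (verit) zero_le_power2 zero_eq_power2)+
    then have "\<forall>i. z$i = 0" using \<open>z$5 = 0\<close> \<open>z$6 = 0\<close> exhaust_6 by metis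
    then show ?thesis by (simp add: vec_eq_iff)
  qed
  have "inj_on h (span U)"
  proof (rule inj_onI)
    fix a b assume "a \<in> span U" "b \<in> span U" "h a = h b"
    then have "a - b \<in> U" "h (a - b) = 0"
      using U lin by (auto simp: span_eq_iff[THEN iffD2, OF U] subspace_diff linear_diff)
    then show "a = b" using ker by fastforce
  qed
  then have "dim (h ` U) = dim U" using dim_image_eq[OF lin] by blast
  then show ?thesis using dim_subset_UNIV[of "h ` U"] by simp
qed

text \<open>Otherwise p, x, y span a 3-dimensional space on which the form is negative semidefinite.\<close>
lemma contact_element_orthogonal_unique:
  assumes W: "contact_element W" and x: "x \<in> W" "lf x p = 0" and y: "y \<in> W" "lf y p = 0" "y \<noteq> 0"
    and p: "lf p p < 0"
  shows "x \<in> span {y}"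
proof (rule ccontr)
  assume x_indep: "x \<notin> span {y}"
  have null: "\<And>a b. a \<in> W \<Longrightarrow> b \<in> W \<Longrightarrow> lf a b = 0" and "subspace W"
    using W unfolding contact_element_def by auto
  then have xy_W: "span {x, y} \<subseteq> W" using x y by (simp add: span_minimal)
  then have "p \<notin> span {x, y}" using null p by fastforce
  then have "dim {p, x, y} = 3" using x_indep y by (simp add: dim_insert)
  moreover have "lf z z \<le> 0" if z_span: "z \<in> span {p, x, y}" for z
  proof -
    obtain c where w_span: "z - c *\<^sub>R p \<in> span {x, y}"
      using z_span span_breakdown_eq[of z p "{x, y}"] by blast
    define w where "w = z - c *\<^sub>R p"
    have z: "z = c *\<^sub>R p + w" unfolding w_def by simp
    have "lf w w = 0" using null xy_W w_span unfolding w_def by blast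
    moreover have "lf p w = 0"
      using lf_eq_0_on_span[of "{x, y}" p] w_span x y lf_sym[of p] unfolding w_def by auto
    ultimately have "lf z z = c * c * lf p p"
      unfolding z using lf_sym[of w p] by (simp add: lf_simps)
    then show ?thesis using p by (simp add: mult_nonneg_nonpos)
  qed
  ultimately show False using dim_le_2_if_lf_nonpos[of "span {p, x, y}"] by simp
qed

lemma point_sphere_spec:
  assumes "x \<in> W" "x \<noteq> 0" "lf x p = 0"
  shows "point_sphere p W \<in> W \<and> point_sphere p W \<noteq> 0 \<and> lf (point_sphere p W) p = 0"
  unfolding point_sphere_def by (rule someI[of _ x]) (use assms in blast)

lemma point_sphere_eq_scaleR:
  assumes W: "contact_element W" and n: "n \<in> W" "n \<noteq> 0" "lf n p = 0" and p: "lf p p < 0"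
  shows "\<exists>c. c \<noteq> 0 \<and> point_sphere p W = c *\<^sub>R n"
proof -
  have ps: "point_sphere p W \<in> W \<and> point_sphere p W \<noteq> 0 \<and> lf (point_sphere p W) p = 0"
    using point_sphere_spec n by blast
  then have "point_sphere p W \<in> span {n}"
    using contact_element_orthogonal_unique[OF W _ _ n(1) n(3) n(2) p] by blast
  then show ?thesis using ps by (auto simp: span_singleton)
qed

lemma point_sphere_eq_combination:
  assumes U: "contact_element U" and n: "n \<in> U" "n \<noteq> 0" "lf n p \<noteq> 0"
    and s: "s \<in> U" "s \<notin> span {n}"
  shows "\<exists>\<alpha> \<beta>. \<beta> \<noteq> 0 \<and> point_sphere p U = \<alpha> *\<^sub>R n + \<beta> *\<^sub>R s"
proof -
  have "subspace U" and dim_U: "dim U = 2" using U unfolding contact_element_def by auto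
  define x where "x = point_sphere p U"
  define wit where "wit = lf n p *\<^sub>R s - lf s p *\<^sub>R n"
  have "wit \<in> U" unfolding wit_def using \<open>subspace U\<close> n s by (simp add: subspace_diff subspace_scale)
  moreover have "lf wit p = 0" unfolding wit_def by (simp add: lf_simps)
  moreover have "wit \<noteq> 0"
  proof
    assume "wit = 0"
    then have rel: "lf n p *\<^sub>R s = lf s p *\<^sub>R n" by (simp add: wit_def)
    have "s = (1 / lf n p) *\<^sub>R (lf n p *\<^sub>R s)" using n(3) by simp
    also have "\<dots> = (lf s p / lf n p) *\<^sub>R n" unfolding rel by simp
    finally show False using s(2) by (metis span_base singletonI span_scale)
  qed
  ultimately have x: "x \<in> U" "x \<noteq> 0" "lf x p = 0" using point_sphere_spec unfolding x_def by blast+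
  have "independent {s, n}" using s n by (auto simp: independent_insert)
  moreover have "s \<noteq> n" using s(2) span_base[of n "{n}"] by auto
  ultimately have "U \<subseteq> span {s, n}"
    using card_ge_dim_independent[of "{s, n}" U] n s dim_U by auto
  then obtain \<beta> where "x - \<beta> *\<^sub>R s \<in> span {n}"
    using x(1) span_breakdown_eq[of x s "{n}"] by blast
  then obtain \<alpha> where "x - \<beta> *\<^sub>R s = \<alpha> *\<^sub>R n" by (auto simp: span_singleton)
  then have x_eq: "x = \<alpha> *\<^sub>R n + \<beta> *\<^sub>R s" by (simp add: algebra_simps)
  moreover have "\<beta> \<noteq> 0"
  proof
    assume "\<beta> = 0"
    then have "\<alpha> * lf n p = 0" using x(3) x_eq by (simp add: lf_simps)
    then show False using x(2) x_eq n(3) \<open>\<beta> = 0\<close> by simp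
  qed
  ultimately show ?thesis unfolding x_def by blast
qed

lemma sig3_dim: "sig3 W a b c \<Longrightarrow> dim W \<le> 3"
proof -
  assume "sig3 W a b c"
  then obtain e1 e2 e3 where W: "W = span {e1, e2, e3}" unfolding sig3_def by blast
  have "dim W \<le> card {e1, e2, e3}" unfolding W dim_span by (rule dim_le_card') simp
  also have "\<dots> \<le> 3" by (simp add: card_insert_if)
  finally show ?thesis .
qed

lemma sig3_orthogonal_eq_0:
  assumes sig: "sig3 (span S) s1 s2 s3" "s1 \<noteq> 0" "s2 \<noteq> 0" "s3 \<noteq> 0"
    and z: "z \<in> span S" "\<And>w. w \<in> S \<Longrightarrow> lf z w = 0"
  shows "z = 0"
proof -
  obtain e1 e2 e3 where S: "span S = span {e1, e2, e3}"
    and e: "lf e1 e1 = s1" "lf e2 e2 = s2" "lf e3 e3 = s3" "lf e1 e2 = 0" "lf e1 e3 = 0" "lf e2 e3 = 0"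
    using sig(1) unfolding sig3_def by blast
  obtain a b c where z_eq: "z = a *\<^sub>R e1 + b *\<^sub>R e2 + c *\<^sub>R e3"
    using z(1) unfolding S by (auto simp: span_breakdown_eq span_singleton algebra_simps)
  have "lf z e1 = 0" "lf z e2 = 0" "lf z e3 = 0"
    using lf_eq_0_on_span[of S z] z(2) S by (metis insertI1 insertI2 span_base)+
  then have "a * s1 = 0" "b * s2 = 0" "c * s3 = 0"
    unfolding z_eq using e lf_sym[of e2 e1] lf_sym[of e3 e1] lf_sym[of e3 e2] by (simp_all add: lf_simps)
  then show ?thesis using z_eq sig by simp
qed

lemma lf_combination_null:
  assumes "lf n n = 0" "lf n x = 0" "lf n y = 0"
  shows "lf (a *\<^sub>R n + b *\<^sub>R x) (c *\<^sub>R n + d *\<^sub>R y) = b * d * lf x y"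
  using assms lf_sym[of x n] by (simp add: lf_simps)

lemma cr_combination_null:
  assumes "lf n n = 0" "lf n x1 = 0" "lf n x2 = 0" "lf n x3 = 0" "lf n x4 = 0"
    and "b1 \<noteq> 0" "b2 \<noteq> 0" "b3 \<noteq> 0" "b4 \<noteq> 0"
  shows "cr (a1 *\<^sub>R n + b1 *\<^sub>R x1) (a2 *\<^sub>R n + b2 *\<^sub>R x2) (a3 *\<^sub>R n + b3 *\<^sub>R x3) (a4 *\<^sub>R n + b4 *\<^sub>R x4)
       = cr x1 x2 x3 x4"
proof -
  have "(b1 * b2 * lf x1 x2) * (b3 * b4 * lf x3 x4) = (b1 * b2 * b3 * b4) * (lf x1 x2 * lf x3 x4)"
       "(b2 * b3 * lf x2 x3) * (b4 * b1 * lf x4 x1) = (b1 * b2 * b3 * b4) * (lf x2 x3 * lf x4 x1)"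
    by (simp_all add: algebra_simps)
  then show ?thesis unfolding cr_def using assms by (simp add: lf_combination_null)
qed

lemma int_eq_if_near_segment:
  fixes a b c :: int and s :: real
  assumes "s \<in> closed_segment (of_int a) (of_int b)" and "\<bar>a - b\<bar> \<le> 1"
    and "\<bar>s - of_int c\<bar> < 1"
  shows "c = a \<or> c = b"
proof -
  have "min (of_int a) (of_int b) \<le> s" "s \<le> max (of_int a) (of_int b)"
    using assms(1) by (auto simp: closed_segment_eq_real_ivl split: if_splits)
  then have "of_int (min a b) - 1 < (of_int c :: real)" "of_int c < (of_int (max a b) + 1 :: real)"
    using assms(3) by auto
  then have "min a b - 1 < c" "c < max a b + 1"
    by (metis of_int_1 of_int_diff of_int_less_iff, metis of_int_1 of_int_add of_int_less_iff)
  then show ?thesis using assms(2) by linarith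
qed

lemma near_pt_coords:
  assumes "dist z (pt (c, d)) < 1"
  shows "\<bar>fst z - of_int c\<bar> < 1" and "\<bar>snd z - of_int d\<bar> < 1"
  using assms dist_fst_le[of z "pt (c, d)"] dist_snd_le[of z "pt (c, d)"]
  by (auto simp: pt_def dist_real_def)

lemma realization_near_isolated_vertex:
  assumes z: "z \<in> realization V" and near: "dist z (pt v) < 1"
    and isolated: "\<nexists>j. edge V v j"
  shows "z = pt v"
proof -
  obtain c d where v: "v = (c, d)" by fastforce
  note near_c = near_pt_coords(1)[OF near[unfolded v]]
    and near_d = near_pt_coords(2)[OF near[unfolded v]]
  from z consider (vertex) "z \<in> pt ` V"
    | (segment) "z \<in> \<Union>{closed_segment (pt i) (pt j) | i j. edge V i j}"
    | (square) "z \<in> \<Union>{cbox (pt (a,b)) (pt (a+1,b+1)) | a b.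
                  (a,b) \<in> V \<and> (a+1,b) \<in> V \<and> (a,b+1) \<in> V \<and> (a+1,b+1) \<in> V}"
    unfolding realization_def by blast
  then show ?thesis
  proof cases
    case vertex
    then obtain e f where "z = pt (e, f)" by fastforce
    then show ?thesis
      using int_eq_if_near_segment[of "of_int e" e e c] int_eq_if_near_segment[of "of_int f" f f d]
        near_c near_d v by (auto simp: pt_def)
  next
    case segment
    then obtain i1 i2 j1 j2 where e: "edge V (i1, i2) (j1, j2)"
      and zs: "z \<in> closed_segment (pt (i1, i2)) (pt (j1, j2))" by fastforce
    have adj: "i1 = j1 \<and> \<bar>i2 - j2\<bar> = 1 \<or> i2 = j2 \<and> \<bar>i1 - j1\<bar> = 1"
      using e unfolding edge_def adjacent_def by auto
    have "fst z \<in> closed_segment (of_int i1) (of_int j1)"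
      and "snd z \<in> closed_segment (of_int i2) (of_int j2)"
      using zs closed_segment_PairD[of "fst z" "snd z"] by (auto simp: pt_def)
    then have "c = i1 \<or> c = j1" "d = i2 \<or> d = j2"
      using int_eq_if_near_segment near_c near_d adj by (metis abs_zero order_refl zero_le_one diff_self)+
    then have "v = (i1, i2) \<or> v = (j1, j2)" using adj v by auto
    then have "edge V v (j1, j2) \<or> edge V v (i1, i2)"
      using e unfolding edge_def adjacent_def by (auto simp: abs_minus_commute)
    then show ?thesis using isolated by blast
  next
    case square
    then obtain a b where corners: "(a,b) \<in> V" "(a+1,b) \<in> V" "(a,b+1) \<in> V" "(a+1,b+1) \<in> V"
      and zb: "z \<in> cbox (pt (a,b)) (pt (a+1,b+1))" by blast
    have "fst z \<in> closed_segment (of_int a) (of_int (a + 1))"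
      and "snd z \<in> closed_segment (of_int b) (of_int (b + 1))"
      using zb by (auto simp: pt_def cbox_Pair_eq mem_Times_iff closed_segment_eq_real_ivl)
    then have "c = a \<or> c = a + 1" "d = b \<or> d = b + 1"
      using int_eq_if_near_segment near_c near_d by fastforce+
    then have "edge V v (2 * a + 1 - c, d)"
      using corners unfolding edge_def adjacent_def v by auto
    then show ?thesis using isolated by blast
  qed
qed

lemma connected_realization_imp_edge:
  assumes con: "connected (realization V)" and v: "v \<in> V" and w: "w \<in> V" "w \<noteq> v"
  shows "\<exists>j. edge V v j"
proof (rule ccontr)
  assume isolated: "\<nexists>j. edge V v j"
  let ?S = "realization V"
  have "pt v \<in> ?S" "pt w \<in> ?S" using v w unfolding realization_def by auto
  have "?S \<inter> ball (pt v) 1 = {pt v}"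
    using realization_near_isolated_vertex[OF _ _ isolated] \<open>pt v \<in> ?S\<close> by (force simp: dist_commute)
  then have "openin (top_of_set ?S) {pt v}" by (metis openin_open_Int open_ball)
  moreover have "closedin (top_of_set ?S) {pt v}"
    using \<open>pt v \<in> ?S\<close> by (simp add: closedin_closed_Int[of "{pt v}" ?S] Int_absorb2)
  ultimately have "{pt v} = ?S" using con \<open>pt v \<in> ?S\<close> unfolding connected_clopen by blast
  moreover have "pt w \<noteq> pt v" using w by (auto simp: pt_def prod_eq_iff)
  ultimately show False using \<open>pt w \<in> ?S\<close> by blast
qed

lemma cr_point_spheres_eq_cr_enveloped:
  assumes ce: "\<And>m. m \<in> {i, j, k, l} \<Longrightarrow> contact_element (u m)"
    and n_in: "\<And>m. m \<in> {i, j, k, l} \<Longrightarrow> n \<in> u m" and n: "n \<noteq> 0" "lf n p \<noteq> 0"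
    and r_in: "\<And>m. m \<in> {i, j, k, l} \<Longrightarrow> r m \<in> u m"
    and r_nonzero: "\<And>m. m \<in> {i, j, k, l} \<Longrightarrow> r m \<noteq> 0"
    and sig: "sig3 (span {r i, r j, r k, r l}) 1 1 (-1) \<or> sig3 (span {r i, r j, r k, r l}) 1 (-1) (-1)"
  shows "cr (point_sphere p (u i)) (point_sphere p (u j)) (point_sphere p (u k)) (point_sphere p (u l))
       = cr (r i) (r j) (r k) (r l)"
proof -
  have null: "lf a b = 0" if "m \<in> {i, j, k, l}" "a \<in> u m" "b \<in> u m" for m a b
    using ce[OF that(1)] that(2,3) unfolding contact_element_def by blast
  have n_null: "lf n n = 0" using null n_in by blast
  have n_orth: "lf n (r m) = 0" if "m \<in> {i, j, k, l}" for m using null n_in r_in that by blast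
  have r_indep: "r m \<notin> span {n}" if m: "m \<in> {i, j, k, l}" for m
  proof
    assume "r m \<in> span {n}"
    then obtain c where "r m = c *\<^sub>R n" by (auto simp: span_singleton)
    then have "lf (r m) w = 0" if "w \<in> {r i, r j, r k, r l}" for w
      using n_orth that by (auto simp: lf_scaleR_left)
    moreover have "r m \<in> span {r i, r j, r k, r l}" using m by (auto intro: span_base)
    ultimately have "r m = 0" using sig sig3_orthogonal_eq_0 by (metis zero_neq_one zero_neq_neg_one)
    then show False using r_nonzero m by blast
  qed
  have "\<exists>\<alpha> \<beta>. \<beta> \<noteq> 0 \<and> point_sphere p (u m) = \<alpha> *\<^sub>R n + \<beta> *\<^sub>R r m" if "m \<in> {i, j, k, l}" for m
    using point_sphere_eq_combination[OF ce n_in n(1,2) r_in r_indep] that by blast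
  then obtain a b where b: "\<And>m. m \<in> {i, j, k, l} \<Longrightarrow> b m \<noteq> 0"
    and ps: "\<And>m. m \<in> {i, j, k, l} \<Longrightarrow> point_sphere p (u m) = a m *\<^sub>R n + b m *\<^sub>R r m"
    by metis
  show ?thesis
    unfolding ps[of i, simplified] ps[of j, simplified] ps[of k, simplified] ps[of l, simplified]
    by (rule cr_combination_null) (simp_all add: n_null n_orth b)
qed

text \<open>Otherwise every point sphere at a vertex with an edge is a multiple of n, and in a connected
  realization every vertex has an edge.\<close>
lemma curvature_sphere_not_point_sphere:
  assumes con: "connected (realization V)" and p: "lf p p < 0"
    and ce: "\<And>i. i \<in> V \<Longrightarrow> contact_element (u i)"
    and n: "n \<noteq> 0" "\<And>i j. edge V i j \<Longrightarrow> n \<in> u i"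
    and nonconst: "\<exists>i\<in>V. \<exists>j\<in>V. \<not> same_point (point_sphere p (u i)) (point_sphere p (u j))"
  shows "lf n p \<noteq> 0"
proof
  assume np: "lf n p = 0"
  obtain i j where ij: "i \<in> V" "j \<in> V" "\<not> same_point (point_sphere p (u i)) (point_sphere p (u j))"
    using nonconst by blast
  then have "i \<noteq> j" unfolding same_point_def by (metis scaleR_one zero_neq_one)
  have "\<exists>c. c \<noteq> 0 \<and> point_sphere p (u v) = c *\<^sub>R n" if "v \<in> {i, j}" for v
  proof -
    have "\<exists>w. edge V v w" using connected_realization_imp_edge[OF con] ij \<open>i \<noteq> j\<close> that by blast
    then show ?thesis using point_sphere_eq_scaleR[OF ce _ n(1) np p] n(2) ij that by blast
  qed
  then obtain ci cj where "ci \<noteq> 0" "point_sphere p (u i) = ci *\<^sub>R n"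
    and "cj \<noteq> 0" "point_sphere p (u j) = cj *\<^sub>R n" by blast
  then have "same_point (point_sphere p (u i)) (point_sphere p (u j))"
    unfolding same_point_def by (intro exI[of _ "cj / ci"]) simp
  then show False using ij by blast
qed

theorem mainTheorem18:
  fixes p :: "real^6"
    and V :: "(int \<times> int) set"
    and r :: "int \<times> int \<Rightarrow> real^6"
    and u :: "int \<times> int \<Rightarrow> (real^6) set"
  assumes "simply_connected_vertex_set V"
    and "point_sphere_complex p"
    and "ribaucour V r"
    and "totally_umbilic V u"
    and "envelops V u r"
    and "\<exists>i\<in>V. \<exists>j\<in>V. \<not> same_point (point_sphere p (u i)) (point_sphere p (u j))"
  shows "(\<forall>i j k l. is_face V i j k l \<longrightarrow>
            cr (r i) (r j) (r k) (r l) =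
            cr (point_sphere p (u i)) (point_sphere p (u j)) (point_sphere p (u k)) (point_sphere p (u l)))
         \<and> (isothermic V (\<lambda>i. point_sphere p (u i)) \<longleftrightarrow> isothermic V r)"
proof -
  obtain n where n: "n \<noteq> 0" "\<And>i j. edge V i j \<Longrightarrow> n \<in> u i \<inter> u j"
    and ce: "\<And>i. i \<in> V \<Longrightarrow> contact_element (u i)"
    and circular: "circular_net V (\<lambda>i. point_sphere p (u i))"
    using assms(2,4) unfolding totally_umbilic_def legendre_map_def by blast
  have "connected (realization V)"
    using assms(1) path_connected_imp_connected unfolding simply_connected_vertex_set_def by blast
  then have np: "lf n p \<noteq> 0"
    using curvature_sphere_not_point_sphere[OF _ _ ce n(1) _ assms(6)] n(2) assms(2)
    unfolding point_sphere_complex_def by fastforce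
  have face_cr: "cr (point_sphere p (u i)) (point_sphere p (u j)) (point_sphere p (u k)) (point_sphere p (u l))
       = cr (r i) (r j) (r k) (r l)" if face: "is_face V i j k l" for i j k l
  proof (rule cr_point_spheres_eq_cr_enveloped[OF ce _ n(1) np])
    have edges: "edge V i j" "edge V j k" "edge V k l" "edge V l i"
      using face unfolding is_face_def by auto
    then show "m \<in> V" "n \<in> u m" if "m \<in> {i, j, k, l}" for m
      using that n(2) unfolding edge_def by blast+
    then show "r m \<in> u m" "r m \<noteq> 0" if "m \<in> {i, j, k, l}" for m
      using that assms(3,5) unfolding envelops_def ribaucour_def lightlike_def by blast+
    show "sig3 (span {r i, r j, r k, r l}) 1 1 (-1) \<or> sig3 (span {r i, r j, r k, r l}) 1 (-1) (-1)"
      using assms(3) face unfolding ribaucour_def Let_def by blast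
  qed
  have "dim (span {r i, r j, r k, r l}) \<le> 3" if "is_face V i j k l" for i j k l
    using assms(3) that sig3_dim unfolding ribaucour_def Let_def by blast
  then have "isothermic V (\<lambda>i. point_sphere p (u i)) \<longleftrightarrow> isothermic V r"
    using circular face_cr unfolding isothermic_def circular_net_def by auto
  then show ?thesis using face_cr by auto
qed

end
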